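(* A homeomorphism $f$ of a compact metric space $X$ has the two-sided limit shadowing property if and only if both $f$ and $f^{-1}$ have the limit shadowing property and $W^u(x)\cap W^s(y)\ne\emptyset$ for all $x,y\in X$.
   Context: $W^s(x)=\{y: d(f^n(x),f^n(y))\to0\ (n\to+\infty)\}$, $W^u(x)=\{y: d(f^{-n}(x),f^{-n}(y))\to0\ (n\to+\infty)\}$. A homeomorphism $g$ has the limit shadowing property if for every $(x_k)_{k\in\mathbb{N}}$ with $d(g(x_k),x_{k+1})\to0$ as $k\to\infty$ there is $y$ with $d(g^k(y),x_k)\to0$ as $k\to\infty$. $f$ has the two-sided limit shadowing property if for every $(x_k)_{k\in\mathbb{Z}}$ with $d(f(x_k),x_{k+1})\to0$ as $|k|\to\infty$ there is $y$ with $d(f^k(y),x_k)\to0$ as $|k|\to\infty$. *)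

theory Defs
  imports "HOL-Analysis.Analysis"
begin

definition zpow_iter :: "('a \<Rightarrow> 'a) \<Rightarrow> ('a \<Rightarrow> 'a) \<Rightarrow> int \<Rightarrow> 'a \<Rightarrow> 'a" where
  "zpow_iter f g k = (if k \<ge> 0 then f ^^ nat k else g ^^ nat (- k))"

definition stable_set :: "'a::metric_space set \<Rightarrow> ('a \<Rightarrow> 'a) \<Rightarrow> 'a \<Rightarrow> 'a set" where
  "stable_set X f x = {y \<in> X. (\<lambda>n. dist ((f ^^ n) x) ((f ^^ n) y)) \<longlonglongrightarrow> 0}"

definition unstable_set :: "'a::metric_space set \<Rightarrow> ('a \<Rightarrow> 'a) \<Rightarrow> 'a \<Rightarrow> 'a set" where
  "unstable_set X g x = {y \<in> X. (\<lambda>n. dist ((g ^^ n) x) ((g ^^ n) y)) \<longlonglongrightarrow> 0}"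

definition limit_shadowing :: "'a::metric_space set \<Rightarrow> ('a \<Rightarrow> 'a) \<Rightarrow> bool" where
  "limit_shadowing X g \<longleftrightarrow>
     (\<forall>x::nat \<Rightarrow> 'a. range x \<subseteq> X \<longrightarrow>
        (\<lambda>k. dist (g (x k)) (x (Suc k))) \<longlonglongrightarrow> 0 \<longrightarrow>
        (\<exists>y\<in>X. (\<lambda>k. dist ((g ^^ k) y) (x k)) \<longlonglongrightarrow> 0))"

definition two_sided_limit_shadowing :: "'a::metric_space set \<Rightarrow> ('a \<Rightarrow> 'a) \<Rightarrow> ('a \<Rightarrow> 'a) \<Rightarrow> bool" where
  "two_sided_limit_shadowing X f g \<longleftrightarrow>
     (\<forall>x::int \<Rightarrow> 'a. range x \<subseteq> X \<longrightarrow>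
        ((\<lambda>k. dist (f (x k)) (x (k + 1))) \<longlongrightarrow> 0) at_top \<longrightarrow>
        ((\<lambda>k. dist (f (x k)) (x (k + 1))) \<longlongrightarrow> 0) at_bot \<longrightarrow>
        (\<exists>y\<in>X. ((\<lambda>k. dist (zpow_iter f g k y) (x k)) \<longlongrightarrow> 0) at_top \<and>
               ((\<lambda>k. dist (zpow_iter f g k y) (x k)) \<longlongrightarrow> 0) at_bot))"

end

theory Submission
  imports Defs
begin

text \<open>Every two-sided sequence is a forward half glued to a backward half. A two-sided limit
  pseudo-orbit therefore splits into a forward limit pseudo-orbit of f and (by uniform continuity of
  the inverse on the compact space) a forward limit pseudo-orbit of its inverse; these are shadowed by
  points p and q, and any point of the unstable set of q meeting the stable set of p shadows the whole
  sequence. Conversely, two-sided shadowing applied to sequences that are exact orbits on one side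
  yields one-sided limit shadowing for f and its inverse, and applied to the backward orbit of x glued
  to the forward orbit of y yields a point of the unstable set of x in the stable set of y.\<close>

lemma tendsto_at_top_int_iff:
  fixes h :: "int \<Rightarrow> 'b::topological_space"
  shows "(h \<longlongrightarrow> l) at_top \<longleftrightarrow> (\<lambda>n. h (int n)) \<longlonglongrightarrow> l"
  using filterlim_compose[OF _ filterlim_int_sequentially] filterlim_int_of_nat_at_topD by blast

lemma tendsto_at_bot_int_iff:
  fixes h :: "int \<Rightarrow> 'b::topological_space"
  shows "(h \<longlongrightarrow> l) at_bot \<longleftrightarrow> (\<lambda>n. h (- int n)) \<longlonglongrightarrow> l"
proof -
  have "(h \<longlongrightarrow> l) at_bot \<longleftrightarrow> ((\<lambda>k. h (- k)) \<longlongrightarrow> l) at_top"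
    unfolding filterlim_def at_bot_mirror[where 'a=int] filtermap_filtermap ..
  then show ?thesis
    using tendsto_at_top_int_iff[of "\<lambda>k. h (- k)"] by simp
qed

lemma tendsto_dist_zero_trans:
  assumes "((\<lambda>n. dist (a n) (b n)) \<longlongrightarrow> 0) F" and "((\<lambda>n. dist (b n) (c n)) \<longlongrightarrow> 0) F"
  shows "((\<lambda>n. dist (a n) (c n)) \<longlongrightarrow> 0) F"
proof (rule tendsto_sandwich[of "\<lambda>_. 0" _ F "\<lambda>n. dist (a n) (b n) + dist (b n) (c n)"])
  show "((\<lambda>n. dist (a n) (b n) + dist (b n) (c n)) \<longlongrightarrow> 0) F"
    using tendsto_add[OF assms] by simp
qed (auto intro!: always_eventually dist_triangle)

lemma zpow_iter_of_nat [simp]: "zpow_iter f g (int n) = f ^^ n"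
  by (simp add: zpow_iter_def)

lemma zpow_iter_minus_of_nat [simp]: "zpow_iter f g (- int n) = g ^^ n"
  by (cases "n = 0") (auto simp: zpow_iter_def)

lemma funpow_in_invariant: "h ` X \<subseteq> X \<Longrightarrow> x \<in> X \<Longrightarrow> (h ^^ n) x \<in> X"
  by (induction n) auto

lemma homeomorphism_apply_funpow_inverse:
  assumes "homeomorphism X X f g" and "x \<in> X"
  shows "f ((g ^^ Suc n) x) = (g ^^ n) x"
  using assms funpow_in_invariant[of g X x n] homeomorphism_image2[OF assms(1)]
  by (simp add: homeomorphism_apply2)

lemma tendsto_dist_apply_inverse:
  assumes "homeomorphism X X f g" and "uniformly_continuous_on X g"
    and "range a \<subseteq> X" and "range b \<subseteq> X"
    and "(\<lambda>n. dist (f (a n)) (b n)) \<longlonglongrightarrow> 0"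
  shows "(\<lambda>n. dist (g (b n)) (a n)) \<longlonglongrightarrow> 0"
proof -
  have "\<forall>n. f (a n) \<in> X"
    using assms(1,3) homeomorphism_image1 by blast
  then have "(\<lambda>n. dist (g (f (a n))) (g (b n))) \<longlonglongrightarrow> 0"
    using assms(2,4,5) unfolding uniformly_continuous_on_sequentially
    by (meson range_subsetD)
  moreover have "g (f (a n)) = a n" for n
    using assms(1,3) homeomorphism_apply1 by blast
  ultimately show ?thesis
    by (simp add: dist_commute)
qed

text \<open>The term a n sits at time -n and b n at time n; a 0 is never used.\<close>
definition join_seq :: "(nat \<Rightarrow> 'a) \<Rightarrow> (nat \<Rightarrow> 'a) \<Rightarrow> int \<Rightarrow> 'a" where
  "join_seq a b k = (if k < 0 then a (nat (- k)) else b (nat k))"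

lemma join_seq_of_nat [simp]: "join_seq a b (int n) = b n"
  by (simp add: join_seq_def)

lemma join_seq_minus_Suc [simp]: "join_seq a b (- int (Suc n)) = a (Suc n)"
  by (simp add: join_seq_def nat_add_distrib)

lemma join_seq_split: "join_seq (\<lambda>n. x (- int n)) (\<lambda>n. x (int n)) = x"
  by (auto simp: join_seq_def)

lemma tendsto_dist_join_seq_at_bot:
  "((\<lambda>k. dist (c k) (join_seq a b k)) \<longlongrightarrow> 0) at_bot \<longleftrightarrow>
   (\<lambda>n. dist (c (- int n)) (a n)) \<longlonglongrightarrow> 0"
  unfolding tendsto_at_bot_int_iff
  by (subst (1 2) filterlim_sequentially_Suc[symmetric]) (simp del: of_nat_Suc)

lemma join_seq_pseudo_orbit_at_top:
  "((\<lambda>k. dist (f (join_seq a b k)) (join_seq a b (k + 1))) \<longlongrightarrow> 0) at_top \<longleftrightarrow>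
   (\<lambda>n. dist (f (b n)) (b (Suc n))) \<longlonglongrightarrow> 0"
  unfolding tendsto_at_top_int_iff by (simp add: join_seq_def nat_add_distrib)

lemma join_seq_pseudo_orbit_at_bot:
  "((\<lambda>k. dist (f (join_seq a b k)) (join_seq a b (k + 1))) \<longlongrightarrow> 0) at_bot \<longleftrightarrow>
   (\<lambda>n. dist (f (a (Suc n))) (a n)) \<longlonglongrightarrow> 0"
proof -
  define e where "e n = dist (f (join_seq a b (- int n))) (join_seq a b (- int n + 1))" for n
  have "e (Suc (Suc n)) = dist (f (a (Suc (Suc n)))) (a (Suc n))" for n
    by (simp add: e_def join_seq_def nat_add_distrib)
  then have "(\<lambda>n. e (Suc (Suc n))) \<longlonglongrightarrow> 0 \<longleftrightarrow> (\<lambda>n. dist (f (a (Suc (Suc n)))) (a (Suc n))) \<longlonglongrightarrow> 0"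
    by presburger
  then show ?thesis
    unfolding tendsto_at_bot_int_iff e_def[symmetric]
    by (simp only: filterlim_sequentially_Suc[of "\<lambda>n. e (Suc n)"] filterlim_sequentially_Suc[of e]
        filterlim_sequentially_Suc[of "\<lambda>n. dist (f (a (Suc n))) (a n)"])
qed

lemma range_join_seq: "range a \<subseteq> X \<Longrightarrow> range b \<subseteq> X \<Longrightarrow> range (join_seq a b) \<subseteq> X"
  by (auto simp: join_seq_def)

lemma two_sided_limit_shadowingD:
  assumes "two_sided_limit_shadowing X f g" and "range a \<subseteq> X" and "range b \<subseteq> X"
    and "(\<lambda>n. dist (f (a (Suc n))) (a n)) \<longlonglongrightarrow> 0"
    and "(\<lambda>n. dist (f (b n)) (b (Suc n))) \<longlonglongrightarrow> 0"
  obtains y where "y \<in> X" and "(\<lambda>n. dist ((g ^^ n) y) (a n)) \<longlonglongrightarrow> 0"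
    and "(\<lambda>n. dist ((f ^^ n) y) (b n)) \<longlonglongrightarrow> 0"
proof -
  have "range (join_seq a b) \<subseteq> X"
    using assms(2,3) by (rule range_join_seq)
  moreover have "((\<lambda>k. dist (f (join_seq a b k)) (join_seq a b (k + 1))) \<longlongrightarrow> 0) at_top"
    using assms(5) unfolding join_seq_pseudo_orbit_at_top .
  moreover have "((\<lambda>k. dist (f (join_seq a b k)) (join_seq a b (k + 1))) \<longlongrightarrow> 0) at_bot"
    using assms(4) unfolding join_seq_pseudo_orbit_at_bot .
  ultimately obtain y where "y \<in> X"
    and top: "((\<lambda>k. dist (zpow_iter f g k y) (join_seq a b k)) \<longlongrightarrow> 0) at_top"
    and bot: "((\<lambda>k. dist (zpow_iter f g k y) (join_seq a b k)) \<longlongrightarrow> 0) at_bot"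
    using assms(1) unfolding two_sided_limit_shadowing_def by blast
  show ?thesis
  proof
    show "(\<lambda>n. dist ((g ^^ n) y) (a n)) \<longlonglongrightarrow> 0"
      using bot by (simp add: tendsto_dist_join_seq_at_bot)
    show "(\<lambda>n. dist ((f ^^ n) y) (b n)) \<longlonglongrightarrow> 0"
      using top by (simp add: tendsto_at_top_int_iff)
  qed fact
qed

lemma two_sided_limit_shadowingI:
  assumes "\<And>a b. range a \<subseteq> X \<Longrightarrow> range b \<subseteq> X \<Longrightarrow>
      (\<lambda>n. dist (f (a (Suc n))) (a n)) \<longlonglongrightarrow> 0 \<Longrightarrow>
      (\<lambda>n. dist (f (b n)) (b (Suc n))) \<longlonglongrightarrow> 0 \<Longrightarrow>
      \<exists>y\<in>X. (\<lambda>n. dist ((g ^^ n) y) (a n)) \<longlonglongrightarrow> 0 \<and> (\<lambda>n. dist ((f ^^ n) y) (b n)) \<longlonglongrightarrow> 0"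
  shows "two_sided_limit_shadowing X f g"
  unfolding two_sided_limit_shadowing_def
proof (intro allI impI)
  fix x :: "int \<Rightarrow> 'a"
  define a where "a n = x (- int n)" for n
  define b where "b n = x (int n)" for n
  have x_eq: "x = join_seq a b"
    unfolding a_def b_def join_seq_split ..
  assume "range x \<subseteq> X"
    and "((\<lambda>k. dist (f (x k)) (x (k + 1))) \<longlongrightarrow> 0) at_top"
    and "((\<lambda>k. dist (f (x k)) (x (k + 1))) \<longlongrightarrow> 0) at_bot"
  moreover have "range a \<subseteq> X" and "range b \<subseteq> X"
    using \<open>range x \<subseteq> X\<close> by (auto simp: a_def b_def)
  ultimately have "range a \<subseteq> X" and "range b \<subseteq> X"
    and "(\<lambda>n. dist (f (b n)) (b (Suc n))) \<longlonglongrightarrow> 0"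
    and "(\<lambda>n. dist (f (a (Suc n))) (a n)) \<longlonglongrightarrow> 0"
    unfolding x_eq join_seq_pseudo_orbit_at_top join_seq_pseudo_orbit_at_bot by simp_all
  then obtain y where "y \<in> X" and "(\<lambda>n. dist ((g ^^ n) y) (a n)) \<longlonglongrightarrow> 0"
    and "(\<lambda>n. dist ((f ^^ n) y) (b n)) \<longlonglongrightarrow> 0"
    using assms by blast
  then show "\<exists>y\<in>X. ((\<lambda>k. dist (zpow_iter f g k y) (x k)) \<longlongrightarrow> 0) at_top \<and>
      ((\<lambda>k. dist (zpow_iter f g k y) (x k)) \<longlongrightarrow> 0) at_bot"
    unfolding x_eq tendsto_dist_join_seq_at_bot tendsto_at_top_int_iff by auto
qed

lemma two_sided_limit_shadowing_imp_limit_shadowing: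
  assumes "homeomorphism X X f g" and "two_sided_limit_shadowing X f g"
  shows "limit_shadowing X f"
  unfolding limit_shadowing_def
proof (intro allI impI)
  fix x :: "nat \<Rightarrow> 'a"
  assume "range x \<subseteq> X" and x: "(\<lambda>n. dist (f (x n)) (x (Suc n))) \<longlonglongrightarrow> 0"
  define a where "a n = (g ^^ n) (x 0)" for n
  have "range a \<subseteq> X"
    using \<open>range x \<subseteq> X\<close> homeomorphism_image2[OF assms(1)]
    by (auto simp: a_def intro: funpow_in_invariant)
  have "(\<lambda>n. dist (f (a (Suc n))) (a n)) \<longlonglongrightarrow> 0"
    using homeomorphism_apply_funpow_inverse[OF assms(1) range_subsetD[OF \<open>range x \<subseteq> X\<close>]]
    by (simp add: a_def del: funpow.simps)
  then obtain y where "y \<in> X" and "(\<lambda>n. dist ((f ^^ n) y) (x n)) \<longlonglongrightarrow> 0"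
    using two_sided_limit_shadowingD[OF assms(2) \<open>range a \<subseteq> X\<close> \<open>range x \<subseteq> X\<close> _ x] by blast
  then show "\<exists>y\<in>X. (\<lambda>n. dist ((f ^^ n) y) (x n)) \<longlonglongrightarrow> 0"
    by blast
qed

lemma two_sided_limit_shadowing_imp_limit_shadowing_inverse:
  assumes "homeomorphism X X f g" and "uniformly_continuous_on X f"
    and "two_sided_limit_shadowing X f g"
  shows "limit_shadowing X g"
  unfolding limit_shadowing_def
proof (intro allI impI)
  fix x :: "nat \<Rightarrow> 'a"
  assume "range x \<subseteq> X" and "(\<lambda>n. dist (g (x n)) (x (Suc n))) \<longlonglongrightarrow> 0"
  then have x: "(\<lambda>n. dist (f (x (Suc n))) (x n)) \<longlonglongrightarrow> 0"
    using tendsto_dist_apply_inverse[OF homeomorphism_symD[OF assms(1)] assms(2), of x "\<lambda>n. x (Suc n)"]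
    by auto
  define b where "b n = (f ^^ n) (x 0)" for n
  have "range b \<subseteq> X"
    using \<open>range x \<subseteq> X\<close> homeomorphism_image1[OF assms(1)]
    by (auto simp: b_def intro: funpow_in_invariant)
  have "(\<lambda>n. dist (f (b n)) (b (Suc n))) \<longlonglongrightarrow> 0"
    by (simp add: b_def)
  then obtain y where "y \<in> X" and "(\<lambda>n. dist ((g ^^ n) y) (x n)) \<longlonglongrightarrow> 0"
    using two_sided_limit_shadowingD[OF assms(3) \<open>range x \<subseteq> X\<close> \<open>range b \<subseteq> X\<close> x] by blast
  then show "\<exists>y\<in>X. (\<lambda>n. dist ((g ^^ n) y) (x n)) \<longlonglongrightarrow> 0"
    by blast
qed

lemma two_sided_limit_shadowing_imp_heteroclinic:
  assumes "homeomorphism X X f g" and "two_sided_limit_shadowing X f g"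
    and "x \<in> X" and "y \<in> X"
  shows "unstable_set X g x \<inter> stable_set X f y \<noteq> {}"
proof -
  define a where "a n = (g ^^ n) x" for n
  define b where "b n = (f ^^ n) y" for n
  have "range a \<subseteq> X" and "range b \<subseteq> X"
    using assms(3,4) homeomorphism_image1[OF assms(1)] homeomorphism_image2[OF assms(1)]
    by (auto simp: a_def b_def intro: funpow_in_invariant)
  have "(\<lambda>n. dist (f (a (Suc n))) (a n)) \<longlonglongrightarrow> 0"
    using homeomorphism_apply_funpow_inverse[OF assms(1,3)] by (simp add: a_def)
  moreover have "(\<lambda>n. dist (f (b n)) (b (Suc n))) \<longlonglongrightarrow> 0"
    by (simp add: b_def)
  ultimately obtain w where "w \<in> X" and "(\<lambda>n. dist ((g ^^ n) w) (a n)) \<longlonglongrightarrow> 0"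
    and "(\<lambda>n. dist ((f ^^ n) w) (b n)) \<longlonglongrightarrow> 0"
    using two_sided_limit_shadowingD[OF assms(2) \<open>range a \<subseteq> X\<close> \<open>range b \<subseteq> X\<close>] by blast
  then have "w \<in> unstable_set X g x \<inter> stable_set X f y"
    by (simp add: unstable_set_def stable_set_def a_def b_def dist_commute)
  then show ?thesis
    by blast
qed

lemma limit_shadowing_imp_two_sided_limit_shadowing:
  assumes "homeomorphism X X f g" and "uniformly_continuous_on X g"
    and "limit_shadowing X f" and "limit_shadowing X g"
    and "\<forall>x\<in>X. \<forall>y\<in>X. unstable_set X g x \<inter> stable_set X f y \<noteq> {}"
  shows "two_sided_limit_shadowing X f g"
proof (rule two_sided_limit_shadowingI)
  fix a b
  assume "range a \<subseteq> X" and "range b \<subseteq> X"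
    and a: "(\<lambda>n. dist (f (a (Suc n))) (a n)) \<longlonglongrightarrow> 0"
    and b: "(\<lambda>n. dist (f (b n)) (b (Suc n))) \<longlonglongrightarrow> 0"
  obtain p where "p \<in> X" and p: "(\<lambda>n. dist ((f ^^ n) p) (b n)) \<longlonglongrightarrow> 0"
    using assms(3) \<open>range b \<subseteq> X\<close> b unfolding limit_shadowing_def by blast
  have "(\<lambda>n. dist (g (a n)) (a (Suc n))) \<longlonglongrightarrow> 0"
    using tendsto_dist_apply_inverse[OF assms(1,2), of "\<lambda>n. a (Suc n)" a] \<open>range a \<subseteq> X\<close> a
    by auto
  then obtain q where "q \<in> X" and q: "(\<lambda>n. dist ((g ^^ n) q) (a n)) \<longlonglongrightarrow> 0"
    using assms(4) \<open>range a \<subseteq> X\<close> unfolding limit_shadowing_def by blast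
  obtain w where "w \<in> unstable_set X g q" and "w \<in> stable_set X f p"
    using assms(5) \<open>p \<in> X\<close> \<open>q \<in> X\<close> by blast
  then have "w \<in> X" and "(\<lambda>n. dist ((g ^^ n) w) ((g ^^ n) q)) \<longlonglongrightarrow> 0"
    and "(\<lambda>n. dist ((f ^^ n) w) ((f ^^ n) p)) \<longlonglongrightarrow> 0"
    by (simp_all add: unstable_set_def stable_set_def dist_commute)
  with p q show "\<exists>y\<in>X. (\<lambda>n. dist ((g ^^ n) y) (a n)) \<longlonglongrightarrow> 0 \<and>
      (\<lambda>n. dist ((f ^^ n) y) (b n)) \<longlonglongrightarrow> 0"
    by (auto intro: tendsto_dist_zero_trans)
qed

theorem mainTheorem9:
  fixes X :: "'a::metric_space set" and f g :: "'a \<Rightarrow> 'a"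
  assumes "compact X" and "homeomorphism X X f g"
  shows "two_sided_limit_shadowing X f g \<longleftrightarrow>
         (limit_shadowing X f \<and> limit_shadowing X g \<and>
          (\<forall>x\<in>X. \<forall>y\<in>X. unstable_set X g x \<inter> stable_set X f y \<noteq> {}))"
proof -
  have "uniformly_continuous_on X f" "uniformly_continuous_on X g"
    using assms by (auto intro: compact_uniformly_continuous homeomorphism_cont1 homeomorphism_cont2)
  then show ?thesis
    using assms(2)
      two_sided_limit_shadowing_imp_limit_shadowing
      two_sided_limit_shadowing_imp_limit_shadowing_inverse
      two_sided_limit_shadowing_imp_heteroclinic
      limit_shadowing_imp_two_sided_limit_shadowing[of X f g]
    by blast
qed

end
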